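(* Let $\Gamma$ be a group with a strictly decreasing sequence $\{\Gamma_n\}$ of finite-index normal subgroups with trivial intersection, $Z=\varprojlim\Gamma/\Gamma_n$ with the left translation action, $\pi_n:Z\to\Gamma/\Gamma_n$ the quotient maps, and for $n\ge2$ let $\gamma_n\in\Gamma_{n-1}\setminus\Gamma_n$ with $\gamma_n^2\notin\Gamma_n$, and $C_n=\pi_n^{-1}(\gamma_n\Gamma_n)$. Let $s_1,s_2\in\Gamma$ and $z,z'\in Z$ with $s_1z\in C_{n_1}$, $s_2z\in C_{n_2}$ where $n_1<n_2$, and $s_1z'\in C_{m_1}$, $s_2z'\in C_{m_2}$. Then $s_1s_2^{-1}\in\gamma_{n_1}\Gamma_{n_1}$, and either (1) $m_1=n_1<m_2$, or (2) $m_1=m_2<n_1$.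
   Context: $Z=\varprojlim\Gamma/\Gamma_n$ is the compact group of compatible sequences in $\prod_n\Gamma/\Gamma_n$, containing $\Gamma$ as a subgroup. All indices are $\ge2$. (In the paper $\Gamma$ is a finitely generated nonabelian free group.) *)

theory Defs
  imports "HOL-Algebra.Algebra"
begin

text \<open>A sequence z picks a coset z n of N n for every n, and is compatible with the
  reduction maps G/N n \<rightarrow> G/N m (m \<le> n), i.e. z n \<subseteq> z m.\<close>
definition invlim :: "('a, 'b) monoid_scheme \<Rightarrow> (nat \<Rightarrow> 'a set) \<Rightarrow> (nat \<Rightarrow> 'a set) set" where
  "invlim G N = {z. (\<forall>n. z n \<in> rcosets\<^bsub>G\<^esub> (N n)) \<and> (\<forall>m n. m \<le> n \<longrightarrow> z n \<subseteq> z m)}"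

definition transl :: "('a, 'b) monoid_scheme \<Rightarrow> 'a \<Rightarrow> (nat \<Rightarrow> 'a set) \<Rightarrow> (nat \<Rightarrow> 'a set)" where
  "transl G s z = (\<lambda>n. s <#\<^bsub>G\<^esub> z n)"

definition proj :: "(nat \<Rightarrow> 'a set) \<Rightarrow> nat \<Rightarrow> 'a set" where
  "proj z n = z n"

definition cyl :: "('a, 'b) monoid_scheme \<Rightarrow> (nat \<Rightarrow> 'a set) \<Rightarrow> (nat \<Rightarrow> 'a) \<Rightarrow> nat \<Rightarrow> (nat \<Rightarrow> 'a set) set" where
  "cyl G N \<gamma> n = {z \<in> invlim G N. proj z n = \<gamma> n <#\<^bsub>G\<^esub> N n}"

end

theory Submission
  imports Defs
begin

(* Put g = s1 s2^-1, so that s1 w = g (s2 w) for every w in the inverse limit.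
  A point of the cylinder C_m has trivial coordinate in Gamma/Gamma_k exactly for k < m.
  Since n1 < n2, the coordinate of s2 z at n1 is trivial, so the one of s1 z there is the
  coset of g, which must be gamma_n1 Gamma_n1.  In particular g lies in Gamma_k for all
  k < n1, so s1 z' and s2 z' agree below n1: either m1 = m2 < n1, or m1, m2 >= n1.  In the
  second case, in Gamma/Gamma_n1 the coordinate of s1 z' is c times that of s2 z', where
  c is the class of gamma_n1, with c ~= 1 and c^2 ~= 1.  The coordinate of s2 z' is 1 or c,
  that of s1 z' is 1 or c as well, and the only consistent choice is 1 and c respectively.
  Finite index, strictness and trivial intersection of the chain Gamma_n are not needed. *)

lemma (in group) rcosets_eq_subgroup:
  assumes "subgroup H G" "C \<in> rcosets H" "x \<in> C" "x \<in> H"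
  shows "C = H"
  using rcos_disjoint[OF assms(1)] subgroup.subgroup_in_rcosets[OF assms(1) is_group] assms(2-4)
  unfolding pairwise_def disjnt_def by blast

lemma (in normal) l_coset_eq_rcos_mult:
  assumes "g \<in> carrier G" "M \<in> rcosets H"
  shows "g <# M = (H #> g) <#> M"
proof -
  obtain x where x: "x \<in> carrier G" "M = H #> x"
    using assms(2) unfolding RCOSETS_def by blast
  have "g <# M = (g \<otimes> x) <# H"
    using x assms(1) by (simp add: coset_eq lcos_m_assoc subset)
  also have "\<dots> = (H #> g) <#> M"
    using x assms(1) coset_eq rcos_sum by simp
  finally show ?thesis .
qed

locale coset_tower = group G for G (structure) +
  fixes N :: "nat \<Rightarrow> 'a set" and \<gamma> :: "nat \<Rightarrow> 'a"
  assumes normal_N: "N n \<lhd> G"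
    and N_Suc_subset: "N (Suc n) \<subseteq> N n"
    and \<gamma>_mem: "n \<ge> 2 \<Longrightarrow> \<gamma> n \<in> N (n - 1)"
    and \<gamma>_not_mem: "n \<ge> 2 \<Longrightarrow> \<gamma> n \<notin> N n"
begin

lemma subgroup_N: "subgroup (N n) G"
  using normal_N normal_imp_subgroup by blast

lemma N_antimono: "i \<le> j \<Longrightarrow> N j \<subseteq> N i"
  using lift_Suc_antimono_le[of N] N_Suc_subset by blast

lemma \<gamma>_carrier: "n \<ge> 2 \<Longrightarrow> \<gamma> n \<in> carrier G"
  using \<gamma>_mem subgroup.mem_carrier[OF subgroup_N] by blast

lemma l_coset_\<gamma>_subset: "n \<ge> 2 \<Longrightarrow> k < n \<Longrightarrow> \<gamma> n <# N n \<subseteq> N k"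
  using \<gamma>_mem N_antimono[of k "n - 1"] N_antimono[of "n - 1" n]
    subgroup.m_closed[OF subgroup_N] unfolding l_coset_def by fastforce

lemma invlim_rcosets: "w \<in> invlim G N \<Longrightarrow> w n \<in> rcosets (N n)"
  unfolding invlim_def by blast

lemma invlim_antimono: "w \<in> invlim G N \<Longrightarrow> m \<le> n \<Longrightarrow> w n \<subseteq> w m"
  unfolding invlim_def by blast

lemma cyl_invlim: "w \<in> cyl G N \<gamma> n \<Longrightarrow> w \<in> invlim G N"
  unfolding cyl_def by blast

lemma cyl_eq: "w \<in> cyl G N \<gamma> n \<Longrightarrow> n \<ge> 2 \<Longrightarrow> w n = N n #> \<gamma> n"
  using normal.coset_eq[OF normal_N] \<gamma>_carrier unfolding cyl_def proj_def by simp

lemma cyl_eq_N_iff: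
  assumes w: "w \<in> cyl G N \<gamma> m" and "m \<ge> 2"
  shows "w k = N k \<longleftrightarrow> k < m"
proof
  assume "w k = N k"
  show "k < m"
  proof (rule ccontr)
    assume "\<not> k < m"
    then have "\<one> \<in> w m"
      using invlim_antimono[OF cyl_invlim[OF w], of m k] \<open>w k = N k\<close>
        subgroup.one_closed[OF subgroup_N] by auto
    then have "N m #> \<gamma> m = N m"
      using rcosets_eq_subgroup[OF subgroup_N invlim_rcosets[OF cyl_invlim[OF w]]]
        subgroup.one_closed[OF subgroup_N] cyl_eq[OF w \<open>m \<ge> 2\<close>] by metis
    then show False
      using coset_join1[OF _ \<gamma>_carrier subgroup_N] \<gamma>_not_mem \<open>m \<ge> 2\<close> by blast
  qed
next
  assume "k < m"
  have "\<gamma> m \<in> w k"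
    using rcos_self[OF \<gamma>_carrier subgroup_N] invlim_antimono[OF cyl_invlim[OF w], of k m]
      cyl_eq[OF w] \<open>m \<ge> 2\<close> \<open>k < m\<close> by auto
  moreover have "N (m - 1) \<subseteq> N k"
    using \<open>k < m\<close> by (intro N_antimono) simp
  then have "\<gamma> m \<in> N k"
    using \<gamma>_mem \<open>m \<ge> 2\<close> by blast
  ultimately show "w k = N k"
    using rcosets_eq_subgroup[OF subgroup_N invlim_rcosets[OF cyl_invlim[OF w]]] by blast
qed

lemma transl_transl:
  assumes "w \<in> invlim G N" "s \<in> carrier G" "t \<in> carrier G"
  shows "transl G s (transl G t w) = transl G (s \<otimes> t) w"
proof
  fix n
  have "w n \<subseteq> carrier G"
    using invlim_rcosets[OF assms(1)] subgroup.rcosets_carrier[OF subgroup_N is_group] by blast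
  then show "transl G s (transl G t w) n = transl G (s \<otimes> t) w n"
    using assms(2,3) unfolding transl_def by (simp add: lcos_m_assoc)
qed

lemma transl_eq_factor_mult:
  "w \<in> invlim G N \<Longrightarrow> g \<in> carrier G \<Longrightarrow> transl G g w n = (N n #> g) \<otimes>\<^bsub>G Mod N n\<^esub> w n"
  using normal.l_coset_eq_rcos_mult[OF normal_N] invlim_rcosets unfolding transl_def by simp

lemma transl_eq_if_mem_N:
  assumes "w \<in> invlim G N" "g \<in> N k"
  shows "transl G g w k = w k"
proof -
  have g: "g \<in> carrier G"
    using assms(2) subgroup.mem_carrier[OF subgroup_N] by blast
  then show ?thesis
    using transl_eq_factor_mult[OF assms(1) g] coset_join2[OF g subgroup_N assms(2)]
      normal.rcosets_mult_eq[OF normal_N invlim_rcosets[OF assms(1)]] by simp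
qed

lemma cyl_transl_mem_l_coset:
  assumes u: "u \<in> cyl G N \<gamma> n2" and v: "transl G g u \<in> cyl G N \<gamma> n1"
    and "n1 < n2" "n1 \<ge> 2" and g: "g \<in> carrier G"
  shows "g \<in> \<gamma> n1 <# N n1"
proof -
  interpret Q: group "G Mod N n1"
    by (rule normal.factorgroup_is_group[OF normal_N])
  have "u n1 = \<one>\<^bsub>G Mod N n1\<^esub>"
    using cyl_eq_N_iff[OF u] \<open>n1 < n2\<close> \<open>n1 \<ge> 2\<close> by simp
  moreover have "N n1 #> g \<in> carrier (G Mod N n1)"
    using rcosetsI[OF subgroup.subset[OF subgroup_N] g] by (simp add: FactGroup_def)
  ultimately have "transl G g u n1 = N n1 #> g"
    using transl_eq_factor_mult[OF cyl_invlim[OF u] g] Q.r_one by metis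
  then show ?thesis
    using cyl_eq[OF v \<open>n1 \<ge> 2\<close>] rcos_self[OF g subgroup_N]
      normal.coset_eq[OF normal_N] \<gamma>_carrier[OF \<open>n1 \<ge> 2\<close>] by simp
qed

lemma cyl_transl_levels_agree_below:
  assumes u: "u \<in> cyl G N \<gamma> m2" and v: "transl G g u \<in> cyl G N \<gamma> m1"
    and "m1 \<ge> 2" "m2 \<ge> 2" "g \<in> N k"
  shows "k < m1 \<longleftrightarrow> k < m2"
  using transl_eq_if_mem_N[OF cyl_invlim[OF u] \<open>g \<in> N k\<close>]
    cyl_eq_N_iff[OF u \<open>m2 \<ge> 2\<close>] cyl_eq_N_iff[OF v \<open>m1 \<ge> 2\<close>] by metis

lemma cyl_transl_levels_at:
  assumes u: "u \<in> cyl G N \<gamma> m2" and v: "transl G g u \<in> cyl G N \<gamma> m1"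
    and g: "g \<in> \<gamma> n <# N n" and sq: "\<gamma> n \<otimes> \<gamma> n \<notin> N n"
    and "n \<ge> 2" "n \<le> m1" "n \<le> m2"
  shows "m1 = n \<and> n < m2"
proof -
  let ?Q = "G Mod N n"
  interpret Q: group ?Q
    by (rule normal.factorgroup_is_group[OF normal_N])
  define c where "c = N n #> \<gamma> n"
  have \<gamma>: "\<gamma> n \<in> carrier G"
    using \<gamma>_carrier \<open>n \<ge> 2\<close> by blast
  have c: "c \<in> carrier ?Q"
    unfolding c_def using rcosetsI[OF subgroup.subset[OF subgroup_N] \<gamma>] by (simp add: FactGroup_def)
  have c_ne: "c \<noteq> \<one>\<^bsub>?Q\<^esub>"
    unfolding c_def using coset_join1[OF _ \<gamma> subgroup_N] \<gamma>_not_mem \<open>n \<ge> 2\<close> by auto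
  have cc_ne: "c \<otimes>\<^bsub>?Q\<^esub> c \<noteq> \<one>\<^bsub>?Q\<^esub>"
    unfolding c_def using normal.rcos_sum[OF normal_N \<gamma> \<gamma>] coset_join1[OF _ _ subgroup_N] sq \<gamma>
    by auto
  have g_carrier: "g \<in> carrier G"
    using g \<gamma> subgroup.subset[OF subgroup_N] unfolding l_coset_def by blast
  have "N n #> g = c"
    using repr_independence[OF _ \<gamma> subgroup_N] g normal.coset_eq[OF normal_N] \<gamma>
    unfolding c_def by metis
  then have v_n: "transl G g u n = c \<otimes>\<^bsub>?Q\<^esub> u n"
    using transl_eq_factor_mult[OF cyl_invlim[OF u] g_carrier] by simp
  have u_n: "u n = (if n < m2 then \<one>\<^bsub>?Q\<^esub> else c)"
    using cyl_eq_N_iff[OF u] cyl_eq[OF u] \<open>n \<le> m2\<close> \<open>n \<ge> 2\<close> unfolding c_def by auto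
  have "transl G g u n \<noteq> \<one>\<^bsub>?Q\<^esub>"
    using v_n u_n Q.r_one[OF c] c_ne cc_ne by (cases "n < m2") simp_all
  then have m1: "m1 = n"
    using cyl_eq_N_iff[OF v _, of n] \<open>n \<le> m1\<close> \<open>n \<ge> 2\<close> by simp
  then have "c \<otimes>\<^bsub>?Q\<^esub> u n = c"
    using cyl_eq[OF v] v_n \<open>n \<ge> 2\<close> unfolding c_def by simp
  moreover have "u n \<in> carrier ?Q"
    using invlim_rcosets[OF cyl_invlim[OF u]] by (simp add: FactGroup_def)
  ultimately have "u n = \<one>\<^bsub>?Q\<^esub>"
    using Q.l_cancel_one[OF c] by blast
  then have "n < m2"
    using u_n c_ne by metis
  with m1 show ?thesis by blast
qed

lemma cyl_transl_levels:
  assumes u: "u \<in> cyl G N \<gamma> m2" and v: "transl G g u \<in> cyl G N \<gamma> m1"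
    and g: "g \<in> \<gamma> n <# N n" and sq: "\<gamma> n \<otimes> \<gamma> n \<notin> N n"
    and "n \<ge> 2" "m1 \<ge> 2" "m2 \<ge> 2"
  shows "(m1 = n \<and> n < m2) \<or> (m1 = m2 \<and> m2 < n)"
proof -
  have below: "k < m1 \<longleftrightarrow> k < m2" if "k < n" for k
    using cyl_transl_levels_agree_below[OF u v \<open>m1 \<ge> 2\<close> \<open>m2 \<ge> 2\<close>]
      l_coset_\<gamma>_subset[OF \<open>n \<ge> 2\<close> that] g by blast
  show ?thesis
  proof (cases "m1 < n \<or> m2 < n")
    case True
    then show ?thesis
      using below[of m1] below[of m2] by auto
  next
    case False
    then show ?thesis
      using cyl_transl_levels_at[OF u v g sq \<open>n \<ge> 2\<close>] by simp
  qed
qed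

end

theorem lemma5p9:
  fixes G (structure) and N :: "nat \<Rightarrow> 'a set" and \<gamma> :: "nat \<Rightarrow> 'a"
    and s1 s2 :: 'a and z z' :: "nat \<Rightarrow> 'a set" and n1 n2 m1 m2 :: nat
  assumes "group G"
    and "\<And>n. N n \<lhd> G"
    and "\<And>n. N (Suc n) \<subset> N n"
    and "\<And>n. finite (rcosets (N n))"
    and "(\<Inter>n. N n) = {\<one>}"
    and "\<And>n. n \<ge> 2 \<Longrightarrow> \<gamma> n \<in> N (n - 1) - N n"
    and "\<And>n. n \<ge> 2 \<Longrightarrow> \<gamma> n \<otimes> \<gamma> n \<notin> N n"
    and "s1 \<in> carrier G" "s2 \<in> carrier G"
    and "z \<in> invlim G N" "z' \<in> invlim G N"
    and "n1 \<ge> 2" "n2 \<ge> 2" "m1 \<ge> 2" "m2 \<ge> 2"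
    and "n1 < n2"
    and "transl G s1 z \<in> cyl G N \<gamma> n1" "transl G s2 z \<in> cyl G N \<gamma> n2"
    and "transl G s1 z' \<in> cyl G N \<gamma> m1" "transl G s2 z' \<in> cyl G N \<gamma> m2"
  shows "s1 \<otimes> inv s2 \<in> \<gamma> n1 <# N n1
         \<and> ((m1 = n1 \<and> n1 < m2) \<or> (m1 = m2 \<and> m2 < n1))"
proof -
  interpret coset_tower G N \<gamma>
    using assms(1-3,6) by (intro coset_tower.intro coset_tower_axioms.intro) auto
  define g where "g = s1 \<otimes> inv s2"
  have g: "g \<in> carrier G"
    unfolding g_def using assms(8,9) by simp
  have "transl G s1 w = transl G g (transl G s2 w)" if "w \<in> invlim G N" for w
    using transl_transl[OF that g assms(9)] assms(8,9) unfolding g_def by (simp add: m_assoc)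
  then have v: "transl G g (transl G s2 z) \<in> cyl G N \<gamma> n1"
    and v': "transl G g (transl G s2 z') \<in> cyl G N \<gamma> m1"
    using assms(10,11,17,19) by simp_all
  have g_coset: "g \<in> \<gamma> n1 <# N n1"
    using cyl_transl_mem_l_coset[OF assms(18) v assms(16,12) g] .
  moreover have "(m1 = n1 \<and> n1 < m2) \<or> (m1 = m2 \<and> m2 < n1)"
    using cyl_transl_levels[OF assms(20) v' g_coset assms(7)[OF assms(12)] assms(12,14,15)] .
  ultimately show ?thesis
    unfolding g_def by blast
qed

end
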